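(* Let $\Gamma$ be a splice diagram satisfying the edge determinant condition. Then $d_u\,d_v\geq \ell_{u,v}^2$ for all nodes $u,v$ of $\Gamma$, with equality if and only if $u=v$.
   Context: A splice diagram is a finite tree $\Gamma$ with at least one vertex of valency $\geq3$ and no vertex of valency $2$; vertices of valency $1$ are leaves, the others nodes. For each node $v$ and edge $e$ adjacent to $v$ a positive integer weight $d_{v,e}$ is given; $d_{v,u}:=d_{v,e}$ for $e$ the edge at $v$ on the geodesic $[v,u]$. The total weight of a node is $d_v=\prod_{e\ni v}d_{v,e}$. For distinct vertices $u,v$, $\ell_{u,v}$ is the product of all weights $d_{w,e}$ with $w$ a node on $[u,v]$ and $e$ an edge at $w$ not contained in $[u,v]$; $\ell_{v,v}:=d_v$. Edge determinant condition: $d_{u,v}d_{v,u}>\ell_{u,v}$ for each edge $[u,v]$ between two nodes. *)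

theory Defs
  imports Main
begin

definition is_path :: "('v \<Rightarrow> 'v \<Rightarrow> bool) \<Rightarrow> 'v \<Rightarrow> 'v \<Rightarrow> 'v list \<Rightarrow> bool" where
  "is_path E u v p \<longleftrightarrow> p \<noteq> [] \<and> hd p = u \<and> last p = v \<and> distinct p \<and>
     (\<forall>i. Suc i < length p \<longrightarrow> E (p ! i) (p ! Suc i))"

definition is_tree :: "'v set \<Rightarrow> ('v \<Rightarrow> 'v \<Rightarrow> bool) \<Rightarrow> bool" where
  "is_tree V E \<longleftrightarrow> finite V \<and>
     (\<forall>x y. E x y \<longrightarrow> x \<in> V \<and> y \<in> V \<and> E y x \<and> x \<noteq> y) \<and>
     (\<forall>u\<in>V. \<forall>v\<in>V. \<exists>!p. is_path E u v p)"

definition nbrs :: "('v \<Rightarrow> 'v \<Rightarrow> bool) \<Rightarrow> 'v \<Rightarrow> 'v set" where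
  "nbrs E v = {x. E v x}"

definition valency :: "('v \<Rightarrow> 'v \<Rightarrow> bool) \<Rightarrow> 'v \<Rightarrow> nat" where
  "valency E v = card (nbrs E v)"

definition is_node :: "'v set \<Rightarrow> ('v \<Rightarrow> 'v \<Rightarrow> bool) \<Rightarrow> 'v \<Rightarrow> bool" where
  "is_node V E v \<longleftrightarrow> v \<in> V \<and> valency E v \<noteq> 1"

definition geod :: "('v \<Rightarrow> 'v \<Rightarrow> bool) \<Rightarrow> 'v \<Rightarrow> 'v \<Rightarrow> 'v list" where
  "geod E u v = (THE p. is_path E u v p)"

definition path_edges :: "'v list \<Rightarrow> ('v \<times> 'v) set" where
  "path_edges p = {(p ! i, p ! Suc i) | i. Suc i < length p}"

text \<open>Weights: d v x is the weight d_{v,e} of the edge e = [v,x] at node v.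
  The weight of v towards u (u \<noteq> v): d_{v,u}.\<close>
definition dw :: "('v \<Rightarrow> 'v \<Rightarrow> bool) \<Rightarrow> ('v \<Rightarrow> 'v \<Rightarrow> nat) \<Rightarrow> 'v \<Rightarrow> 'v \<Rightarrow> nat" where
  "dw E d v u = d v (geod E v u ! 1)"

definition dtot :: "('v \<Rightarrow> 'v \<Rightarrow> bool) \<Rightarrow> ('v \<Rightarrow> 'v \<Rightarrow> nat) \<Rightarrow> 'v \<Rightarrow> nat" where
  "dtot E d v = (\<Prod>x\<in>nbrs E v. d v x)"

definition ell :: "'v set \<Rightarrow> ('v \<Rightarrow> 'v \<Rightarrow> bool) \<Rightarrow> ('v \<Rightarrow> 'v \<Rightarrow> nat) \<Rightarrow> 'v \<Rightarrow> 'v \<Rightarrow> nat" where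
  "ell V E d u v =
    (if u = v then dtot E d v
     else (\<Prod>w\<in>{w \<in> set (geod E u v). is_node V E w}.
             \<Prod>x\<in>{x. E w x \<and> (w, x) \<notin> path_edges (geod E u v) \<and> (x, w) \<notin> path_edges (geod E u v)}.
               d w x))"

definition splice_diagram :: "'v set \<Rightarrow> ('v \<Rightarrow> 'v \<Rightarrow> bool) \<Rightarrow> ('v \<Rightarrow> 'v \<Rightarrow> nat) \<Rightarrow> bool" where
  "splice_diagram V E d \<longleftrightarrow> is_tree V E \<and>
     (\<exists>v\<in>V. valency E v \<ge> 3) \<and>
     (\<forall>v\<in>V. valency E v \<noteq> 2) \<and>
     (\<forall>v x. is_node V E v \<longrightarrow> E v x \<longrightarrow> d v x > 0)"

definition edge_determinant_condition ::
  "'v set \<Rightarrow> ('v \<Rightarrow> 'v \<Rightarrow> bool) \<Rightarrow> ('v \<Rightarrow> 'v \<Rightarrow> nat) \<Rightarrow> bool" where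
  "edge_determinant_condition V E d \<longleftrightarrow>
     (\<forall>u v. is_node V E u \<longrightarrow> is_node V E v \<longrightarrow> E u v \<longrightarrow>
        dw E d u v * dw E d v u > ell V E d u v)"

end

theory Submission
  imports Defs
begin

(* Let u = p_0, ..., p_m = v be the geodesic between distinct nodes and
   a_i = d_{p_i,p_(i+1)} d_{p_(i+1),p_i}. Every edge at a vertex of the geodesic either lies on it
   or contributes to l_{u,v}, so l_{u,v} * prod a_i = prod d_{p_i}. For an edge [x,y] this reads
   d_x d_y = l_{x,y} a < a^2 by the edge determinant condition. Squaring the identity for u, v
   and regrouping (prod d_{p_i})^2 = d_u d_v prod_{i<m} d_{p_i} d_{p_(i+1)} gives
   l_{u,v}^2 < d_u d_v. *)

lemma sq_lt_of_chain_products: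
  fixes D A :: "nat \<Rightarrow> 'a::linordered_semidom"
  assumes m: "0 < m"
    and prod_eq: "L * (\<Prod>i<m. A i) = (\<Prod>i\<le>m. D i)"
    and step: "\<And>i. i < m \<Longrightarrow> D i * D (Suc i) < (A i)\<^sup>2"
    and pos: "\<And>i. i \<le> m \<Longrightarrow> 0 < D i"
  shows "L\<^sup>2 < D 0 * D m"
proof -
  have step_pos: "0 < D i * D (Suc i)" if "i < m" for i
    using pos[of i] pos[of "Suc i"] that by simp
  have A_sq_pos: "0 < (A i)\<^sup>2" if "i < m" for i
    using step_pos[OF that] step[OF that] by (rule less_trans)
  have "L\<^sup>2 * (\<Prod>i<m. (A i)\<^sup>2) = (\<Prod>i\<le>m. D i)\<^sup>2"
    by (simp flip: prod_eq add: power_mult_distrib prod_power_distrib)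
  also have "\<dots> = ((\<Prod>i<m. D i) * D m) * (D 0 * (\<Prod>i<m. D (Suc i)))"
    unfolding power2_eq_square lessThan_Suc_atMost[symmetric]
    by (subst (2) prod.lessThan_Suc_shift) (simp only: prod.lessThan_Suc)
  also have "\<dots> = D 0 * D m * (\<Prod>i<m. D i * D (Suc i))"
    by (simp add: prod.distrib ac_simps)
  also have "\<dots> < D 0 * D m * (\<Prod>i<m. (A i)\<^sup>2)"
    using m step step_pos A_sq_pos pos[of 0] pos[of m]
    by (intro mult_strict_left_mono prod_mono_strict[of 0]) (auto intro: less_imp_le)
  finally show ?thesis
  proof (rule mult_right_less_imp_less)
    show "0 \<le> (\<Prod>i<m. (A i)\<^sup>2)"
      using A_sq_pos by (intro prod_nonneg) (simp add: less_imp_le)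
  qed
qed

definition off_path_nbrs :: "('v \<Rightarrow> 'v \<Rightarrow> bool) \<Rightarrow> 'v list \<Rightarrow> 'v \<Rightarrow> 'v set" where
  "off_path_nbrs E p w = {x. E w x \<and> (w, x) \<notin> path_edges p \<and> (x, w) \<notin> path_edges p}"

lemma path_edges_from_nth:
  assumes "distinct p" "i < length p"
  shows "(p ! i, x) \<in> path_edges p \<longleftrightarrow> Suc i < length p \<and> x = p ! Suc i"
  using assms unfolding path_edges_def by (auto simp: nth_eq_iff_index_eq)

lemma path_edges_into_nth:
  assumes "distinct p" "i < length p"
  shows "(x, p ! i) \<in> path_edges p \<longleftrightarrow> 0 < i \<and> x = p ! (i - 1)"
  using assms unfolding path_edges_def
  by (auto simp: nth_eq_iff_index_eq intro!: exI[of _ "i - 1"])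

lemma dtot_split_at_path_vertex:
  assumes fin: "finite (nbrs E (p ! i))" and dist: "distinct p" and i: "i < length p"
    and adj: "\<And>j. Suc j < length p \<Longrightarrow> E (p ! j) (p ! Suc j)"
    and sym: "\<And>x y. E x y \<Longrightarrow> E y x"
  shows "dtot E d (p ! i) = (\<Prod>x\<in>off_path_nbrs E p (p ! i). d (p ! i) x)
     * (if Suc i < length p then d (p ! i) (p ! Suc i) else 1)
     * (if 0 < i then d (p ! i) (p ! (i - 1)) else 1)"
proof -
  define next_nbr where "next_nbr = (if Suc i < length p then {p ! Suc i} else {})"
  define prev_nbr where "prev_nbr = (if 0 < i then {p ! (i - 1)} else {})"
  have prev_edge: "E (p ! i) (p ! (i - 1))" if "0 < i"
    using adj[of "i - 1"] sym that i by simp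
  have nbrs_split: "nbrs E (p ! i) = off_path_nbrs E p (p ! i) \<union> (next_nbr \<union> prev_nbr)"
    using adj[of i] prev_edge
    unfolding nbrs_def off_path_nbrs_def next_nbr_def prev_nbr_def
      path_edges_from_nth[OF dist i] path_edges_into_nth[OF dist i]
    by auto
  have disj: "off_path_nbrs E p (p ! i) \<inter> (next_nbr \<union> prev_nbr) = {}"
    unfolding off_path_nbrs_def next_nbr_def prev_nbr_def
      path_edges_from_nth[OF dist i] path_edges_into_nth[OF dist i]
    by auto
  have "p ! Suc i \<noteq> p ! (i - 1)" if "Suc i < length p"
    using dist that by (simp add: nth_eq_iff_index_eq)
  then have "(\<Prod>x\<in>next_nbr \<union> prev_nbr. d (p ! i) x)
      = (if Suc i < length p then d (p ! i) (p ! Suc i) else 1)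
        * (if 0 < i then d (p ! i) (p ! (i - 1)) else 1)"
    unfolding next_nbr_def prev_nbr_def by auto
  moreover have "finite (off_path_nbrs E p (p ! i))" "finite (next_nbr \<union> prev_nbr)"
    using fin nbrs_split by auto
  ultimately show ?thesis
    unfolding dtot_def nbrs_split using disj by (simp add: prod.union_disjoint)
qed

lemma prod_dtot_along_path:
  assumes fin: "\<And>w. finite (nbrs E w)" and dist: "distinct p" and len: "length p = Suc m"
    and adj: "\<And>j. Suc j < length p \<Longrightarrow> E (p ! j) (p ! Suc j)"
    and sym: "\<And>x y. E x y \<Longrightarrow> E y x"
  shows "(\<Prod>i\<le>m. dtot E d (p ! i))
     = (\<Prod>i\<le>m. \<Prod>x\<in>off_path_nbrs E p (p ! i). d (p ! i) x)
       * (\<Prod>i<m. d (p ! i) (p ! Suc i) * d (p ! Suc i) (p ! i))"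
proof -
  have "(\<Prod>i<Suc m. dtot E d (p ! i))
      = (\<Prod>i<Suc m. \<Prod>x\<in>off_path_nbrs E p (p ! i). d (p ! i) x)
        * (\<Prod>i<Suc m. if Suc i < Suc m then d (p ! i) (p ! Suc i) else 1)
        * (\<Prod>i<Suc m. if 0 < i then d (p ! i) (p ! (i - 1)) else 1)"
    using dtot_split_at_path_vertex[OF fin dist _ adj sym] len
    by (simp add: prod.distrib)
  also have "(\<Prod>i<Suc m. if Suc i < Suc m then d (p ! i) (p ! Suc i) else 1)
      = (\<Prod>i<m. d (p ! i) (p ! Suc i))"
    by (simp add: prod.lessThan_Suc)
  also have "(\<Prod>i<Suc m. if 0 < i then d (p ! i) (p ! (i - 1)) else 1)
      = (\<Prod>i<m. d (p ! Suc i) (p ! i))"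
    by (simp only: prod.lessThan_Suc_shift) simp
  finally show ?thesis
    by (simp add: prod.distrib lessThan_Suc_atMost mult.assoc)
qed

lemma is_tree_edgeD:
  assumes "is_tree V E" "E x y"
  shows "x \<in> V" "y \<in> V" "E y x" "x \<noteq> y"
  using assms unfolding is_tree_def by blast+

lemma is_tree_finite_nbrs:
  assumes "is_tree V E"
  shows "finite (nbrs E w)"
proof (rule finite_subset)
  show "nbrs E w \<subseteq> V"
    using is_tree_edgeD[OF assms] unfolding nbrs_def by blast
  show "finite V"
    using assms unfolding is_tree_def by blast
qed

lemma is_path_geod:
  assumes "is_tree V E" "u \<in> V" "v \<in> V"
  shows "is_path E u v (geod E u v)"
  using assms unfolding is_tree_def geod_def by (blast intro: theI')

lemma geod_edge:
  assumes tree: "is_tree V E" and xy: "E x y"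
  shows "geod E x y = [x, y]"
proof -
  have "is_path E x y [x, y]"
    using xy is_tree_edgeD[OF tree xy] unfolding is_path_def by (auto simp: less_Suc_eq)
  moreover have "\<exists>!p. is_path E x y p"
    using tree is_tree_edgeD[OF tree xy] unfolding is_tree_def by blast
  ultimately show ?thesis
    unfolding geod_def by (rule the1_equality[rotated])
qed

text \<open>Interior vertices of a path have valency at least 2, and \<open>is_node\<close> only excludes
  valency 1.\<close>
lemma is_node_path_nth:
  assumes tree: "is_tree V E" and p: "is_path E u v p"
    and u: "is_node V E u" and v: "is_node V E v" and i: "i < length p"
  shows "is_node V E (p ! i)"
proof -
  have ne: "p \<noteq> []" and dist: "distinct p"
    and adj: "\<And>j. Suc j < length p \<Longrightarrow> E (p ! j) (p ! Suc j)"
    and hd: "hd p = u" and last: "last p = v"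
    using p unfolding is_path_def by auto
  consider "i = 0" | "i = length p - 1" | "0 < i" "Suc i < length p"
    using i by linarith
  then show ?thesis
  proof cases
    case 1
    then show ?thesis using hd ne u by (simp add: hd_conv_nth)
  next
    case 2
    then show ?thesis using last ne v by (simp add: last_conv_nth)
  next
    case 3
    have next_edge: "E (p ! i) (p ! Suc i)"
      using adj 3 by blast
    have prev_edge: "E (p ! i) (p ! (i - 1))"
      using adj[of "i - 1"] is_tree_edgeD(3)[OF tree] 3 by simp
    have "p ! Suc i \<noteq> p ! (i - 1)"
      using dist 3 by (simp add: nth_eq_iff_index_eq)
    then have "2 \<le> card {p ! Suc i, p ! (i - 1)}"
      by simp
    also have "\<dots> \<le> valency E (p ! i)"
      unfolding valency_def using next_edge prev_edge is_tree_finite_nbrs[OF tree]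
      by (intro card_mono) (auto simp: nbrs_def)
    finally show ?thesis
      using is_tree_edgeD(1)[OF tree next_edge] unfolding is_node_def by simp
  qed
qed

lemma ell_eq_prod_off_path_nbrs:
  assumes tree: "is_tree V E" and u: "is_node V E u" and v: "is_node V E v" and uv: "u \<noteq> v"
  defines "p \<equiv> geod E u v"
  shows "ell V E d u v = (\<Prod>i<length p. \<Prod>x\<in>off_path_nbrs E p (p ! i). d (p ! i) x)"
proof -
  have path: "is_path E u v p"
    unfolding p_def using is_path_geod[OF tree] u v unfolding is_node_def by blast
  then have "{w \<in> set p. is_node V E w} = (!) p ` {..<length p}"
    using is_node_path_nth[OF tree path u v] by (auto simp: in_set_conv_nth)
  moreover have "inj_on ((!) p) {..<length p}"
    using path unfolding is_path_def by (simp add: inj_on_nth)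
  ultimately show ?thesis
    unfolding ell_def off_path_nbrs_def p_def using uv by (simp add: prod.reindex)
qed

lemma ell_mult_edge_weights:
  assumes tree: "is_tree V E" and u: "is_node V E u" and v: "is_node V E v" and uv: "u \<noteq> v"
  defines "p \<equiv> geod E u v"
  assumes len: "length p = Suc m"
  shows "ell V E d u v * (\<Prod>i<m. d (p ! i) (p ! Suc i) * d (p ! Suc i) (p ! i))
     = (\<Prod>i\<le>m. dtot E d (p ! i))"
proof -
  have path: "is_path E u v p"
    unfolding p_def using is_path_geod[OF tree] u v unfolding is_node_def by blast
  show ?thesis
    using ell_eq_prod_off_path_nbrs[OF tree u v uv, of d, folded p_def] len
      prod_dtot_along_path[OF is_tree_finite_nbrs[OF tree] _ len _ is_tree_edgeD(3)[OF tree]]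
      path
    by (simp add: is_path_def lessThan_Suc_atMost)
qed

lemma dtot_pos:
  assumes "splice_diagram V E d" "is_node V E w"
  shows "0 < dtot E d w"
  using assms is_tree_finite_nbrs unfolding splice_diagram_def dtot_def
  by (intro prod_pos) (auto simp: nbrs_def)

lemma dtot_mult_lt_edge_weights_sq:
  assumes tree: "is_tree V E" and edc: "edge_determinant_condition V E d"
    and x: "is_node V E x" and y: "is_node V E y" and xy: "E x y"
  shows "dtot E d x * dtot E d y < (d x y * d y x)\<^sup>2"
proof -
  have geods: "geod E x y = [x, y]" "geod E y x = [y, x]"
    using geod_edge[OF tree] xy is_tree_edgeD(3)[OF tree xy] by auto
  have "ell V E d x y < dw E d x y * dw E d y x"
    using edc x y xy unfolding edge_determinant_condition_def by blast
  then have ell_lt: "ell V E d x y < d x y * d y x"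
    unfolding dw_def geods by simp
  have "dtot E d x * dtot E d y = ell V E d x y * (d x y * d y x)"
    using ell_mult_edge_weights[OF tree x y is_tree_edgeD(4)[OF tree xy], of 1 d] geods
    by simp
  also have "\<dots> < (d x y * d y x) * (d x y * d y x)"
    using ell_lt by (rule mult_strict_right_mono) (rule le_less_trans[OF zero_le ell_lt])
  finally show ?thesis
    by (simp only: power2_eq_square)
qed

lemma ell_sq_lt_dtot_mult:
  assumes sd: "splice_diagram V E d" and edc: "edge_determinant_condition V E d"
    and u: "is_node V E u" and v: "is_node V E v" and uv: "u \<noteq> v"
  shows "(ell V E d u v)\<^sup>2 < dtot E d u * dtot E d v"
proof -
  have tree: "is_tree V E"
    using sd unfolding splice_diagram_def by blast
  define p where "p = geod E u v"
  have path: "is_path E u v p"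
    unfolding p_def using is_path_geod[OF tree] u v unfolding is_node_def by blast
  then obtain m where len: "length p = Suc m"
    unfolding is_path_def by (cases p) auto
  have ends: "p ! 0 = u" "p ! m = v"
    using path len unfolding is_path_def by (auto simp: hd_conv_nth last_conv_nth)
  with uv have "0 < m"
    by (cases m) auto
  have nodes: "is_node V E (p ! i)" if "i \<le> m" for i
    using is_node_path_nth[OF tree path u v] len that by simp
  have "(ell V E d u v)\<^sup>2 < dtot E d (p ! 0) * dtot E d (p ! m)"
  proof (rule sq_lt_of_chain_products)
    show "ell V E d u v * (\<Prod>i<m. d (p ! i) (p ! Suc i) * d (p ! Suc i) (p ! i))
        = (\<Prod>i\<le>m. dtot E d (p ! i))"
      using ell_mult_edge_weights[OF tree u v uv] len unfolding p_def by blast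
    show "dtot E d (p ! i) * dtot E d (p ! Suc i) < (d (p ! i) (p ! Suc i) * d (p ! Suc i) (p ! i))\<^sup>2"
      if "i < m" for i
      using dtot_mult_lt_edge_weights_sq[OF tree edc nodes nodes] path len that
      by (simp add: is_path_def)
  qed (use \<open>0 < m\<close> dtot_pos[OF sd nodes] in auto)
  then show ?thesis
    unfolding ends .
qed

theorem lemma2p9:
  fixes V :: "'v set" and E :: "'v \<Rightarrow> 'v \<Rightarrow> bool" and d :: "'v \<Rightarrow> 'v \<Rightarrow> nat"
  assumes "splice_diagram V E d"
    and "edge_determinant_condition V E d"
    and "is_node V E u" and "is_node V E v"
  shows "dtot E d u * dtot E d v \<ge> (ell V E d u v)\<^sup>2 \<and>
         (dtot E d u * dtot E d v = (ell V E d u v)\<^sup>2 \<longleftrightarrow> u = v)"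
proof (cases "u = v")
  case True
  then show ?thesis
    unfolding ell_def by (simp add: power2_eq_square)
next
  case False
  then show ?thesis
    using ell_sq_lt_dtot_mult[OF assms] by simp
qed

end
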